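(* There is a constant $C>0$ such that for all $d\ge1$, $$\pi_d(p_1p_2\cdots p_{d+1})=O(C^d).$$
   Context: $p_i$ denotes the $i$-th prime. For a real $x$, $\pi_d(x)$ is the number of squarefree positive integers $m\le x$ having exactly $d$ prime factors. *)

theory Defs
  imports "HOL-Computational_Algebra.Computational_Algebra"
begin

text \<open>The i-th prime, 1-indexed: nth_prime 1 = 2, nth_prime 2 = 3, ...\<close>
definition nth_prime :: "nat \<Rightarrow> nat" where
  "nth_prime i = enumerate {p. prime p} (i - 1)"

definition pi_d :: "nat \<Rightarrow> real \<Rightarrow> nat" where
  "pi_d d x = card {m::nat. 0 < m \<and> real m \<le> x \<and> squarefree m \<and> card (prime_factors m) = d}"

end

theory Submission
  imports Defs "HOL-Real_Asymp.Real_Asymp"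
begin

text \<open>
  Let N be the (d+1)-st prime and T the set of primes up to N, so that the primorial is \<Prod>T.
  A squarefree m \<le> \<Prod>T with set of prime factors S, |S| = d, is determined by the pair
  A = T - S, U = S - T; moreover |A| = |U| + 1, every element of U exceeds N, and
  \<Prod>U \<le> \<Prod>A \<le> N^(|U|+1). Rankin's trick (weighting a k-set U of integers above N by
  (N^(k+1) / \<Prod>U)^(s+1) \<ge> 1) shows that there are at most N^(s+1) (N/s)^k / k! \<le> N^(s+1) e^(N/s)
  such sets U, for every s \<ge> 1, hence \<pi>_d(\<Prod>T) \<le> 2^(d+1) N^(s+1) e^(N/s). Chebyshev's estimate
  4^n \<le> (2n)^(\<pi>(2n)+1) gives N = O(d^(3/2)), so for s \<approx> N/d both N^(s+1) and e^(N/s) are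
  at most e^d once d is large.
\<close>

section \<open>Chebyshev's lower bound for the prime counting function\<close>

lemma multiplicity_le_self:
  fixes p n :: nat
  assumes "prime p" "0 < n"
  shows "multiplicity p n \<le> n"
proof -
  have "p ^ multiplicity p n \<le> n"
    using assms by (intro dvd_imp_le multiplicity_dvd) auto
  moreover have "multiplicity p n < 2 ^ multiplicity p n" by (rule less_exp)
  moreover have "2 ^ multiplicity p n \<le> p ^ multiplicity p n"
    using prime_ge_2_nat[OF assms(1)] by (intro power_mono) auto
  ultimately show ?thesis by linarith
qed

lemma multiplicity_fact:
  fixes p :: nat
  assumes "prime p" "n \<le> M"
  shows "multiplicity p (fact n) = (\<Sum>i\<in>{1..M}. n div p ^ i)"
  using assms(2)
proof (induction n)
  case 0
  then show ?case by simp
next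
  case (Suc n)
  have dvd_iff: "p ^ i dvd Suc n \<longleftrightarrow> i \<le> multiplicity p (Suc n)" for i
    using power_dvd_iff_le_multiplicity[of "Suc n" p i] prime_gt_1_nat[OF assms(1)] by simp
  have "{1..M} \<inter> {i. p ^ i dvd Suc n} = {1..multiplicity p (Suc n)}"
    using multiplicity_le_self[OF assms(1), of "Suc n"] Suc.prems unfolding dvd_iff by auto
  then have multiplicity_Suc:
    "multiplicity p (Suc n) = (\<Sum>i\<in>{1..M}. if p ^ i dvd Suc n then 1 else 0)"
    by (simp add: sum.If_cases)
  have "multiplicity p (fact (Suc n) :: nat) = multiplicity p (Suc n * fact n)"
    by (simp add: fact_Suc)
  also have "\<dots> = multiplicity p (Suc n) + multiplicity p (fact n :: nat)"
    using assms(1) by (intro prime_elem_multiplicity_mult_distrib) auto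
  also have "\<dots> = (\<Sum>i\<in>{1..M}. (if p ^ i dvd Suc n then 1 else 0) + n div p ^ i)"
    using Suc by (simp add: multiplicity_Suc sum.distrib)
  also have "\<dots> = (\<Sum>i\<in>{1..M}. Suc n div p ^ i)"
    using prime_gt_0_nat[OF assms(1)] by (intro sum.cong) (auto simp: div_Suc dvd_eq_mod_eq_0)
  finally show ?case .
qed

lemma double_div_le:
  fixes n q :: nat
  assumes "0 < q"
  shows "(2 * n) div q \<le> 2 * (n div q) + (if q \<le> 2 * n then 1 else 0)"
proof (cases "q \<le> 2 * n")
  case True
  define a r where "a = n div q" and "r = n mod q"
  have "n = q * a + r" "r < q" using assms unfolding a_def r_def by simp_all
  then have "2 * n < (2 * a + 2) * q" by (simp add: algebra_simps)
  then have "(2 * n) div q < 2 * (n div q) + 2" unfolding a_def by (rule less_mult_imp_div_less)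
  then show ?thesis using True by simp
qed simp

lemma prime_power_multiplicity_central_binomial_le:
  fixes p n :: nat
  assumes "prime p" "0 < n"
  shows "p ^ multiplicity p ((2 * n) choose n) \<le> 2 * n"
proof (rule ccontr)
  define L where "L = multiplicity p ((2 * n) choose n)"
  define J where "J = {1..2 * n} \<inter> {i. p ^ i \<le> 2 * n}"
  assume "\<not> p ^ multiplicity p ((2 * n) choose n) \<le> 2 * n"
  then have large: "2 * n < p ^ L" unfolding L_def by simp
  have p_pos: "0 < p ^ i" for i using prime_gt_0_nat[OF assms(1)] by simp
  have fact_eq: "((2 * n) choose n) * (fact n * fact n) = (fact (2 * n) :: nat)"
    using binomial_fact_lemma[of n "2 * n"] by (simp add: mult_ac)
  have "multiplicity p (fact (2 * n) :: nat) = L + 2 * multiplicity p (fact n :: nat)"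
    unfolding fact_eq[symmetric] L_def using assms
    by (simp add: prime_elem_multiplicity_mult_distrib)
  then have L_eq: "L + (\<Sum>i\<in>{1..2 * n}. 2 * (n div p ^ i)) = (\<Sum>i\<in>{1..2 * n}. (2 * n) div p ^ i)"
    using multiplicity_fact[OF assms(1), of "2 * n" "2 * n"] multiplicity_fact[OF assms(1), of n "2 * n"]
    by (simp add: sum_distrib_left)
  have "(\<Sum>i\<in>{1..2 * n}. (2 * n) div p ^ i)
      \<le> (\<Sum>i\<in>{1..2 * n}. 2 * (n div p ^ i) + (if p ^ i \<le> 2 * n then 1 else 0))"
    by (intro sum_mono double_div_le p_pos)
  also have "\<dots> = (\<Sum>i\<in>{1..2 * n}. 2 * (n div p ^ i)) + card J"
    unfolding J_def by (simp add: sum.distrib sum.If_cases)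
  finally have "L \<le> card J" using L_eq by linarith
  moreover have "J \<subseteq> {1..<L}"
  proof
    fix i assume "i \<in> J"
    then have "p ^ i < p ^ L" "1 \<le> i" using large unfolding J_def by auto
    then show "i \<in> {1..<L}" using prime_gt_1_nat[OF assms(1)] by (simp add: power_strict_increasing_iff)
  qed
  then have "card J \<le> L - 1" using card_mono[of "{1..<L}" J] by simp
  moreover have "L \<noteq> 0" using large assms(2) by (intro notI) simp
  ultimately show False by simp
qed

lemma central_binomial_le_power_card_primes:
  fixes n :: nat
  assumes "0 < n"
  shows "(2 * n) choose n \<le> (2 * n) ^ card {p. prime p \<and> p \<le> 2 * n}"
proof -
  define b where "b = (2 * n) choose n"
  have "fact n * fact n * b = (fact (2 * n) :: nat)"
    using binomial_fact_lemma[of n "2 * n"] by (simp add: b_def)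
  then have "b dvd fact (2 * n)" by (metis dvd_triv_right)
  have factors_small: "prime_factors b \<subseteq> {p. prime p \<and> p \<le> 2 * n}"
  proof
    fix p assume "p \<in> prime_factors b"
    then have "prime p" "p dvd fact (2 * n)"
      using \<open>b dvd fact (2 * n)\<close> by (auto intro: dvd_trans)
    then show "p \<in> {p. prime p \<and> p \<le> 2 * n}" by (simp add: prime_dvd_fact_iff)
  qed
  have "b = (\<Prod>p\<in>prime_factors b. p ^ multiplicity p b)"
    by (rule prime_factorization_nat) (simp add: b_def)
  also have "\<dots> \<le> (\<Prod>p\<in>prime_factors b. 2 * n)"
    by (intro prod_mono conjI) (auto simp: b_def intro!: prime_power_multiplicity_central_binomial_le assms)
  also have "\<dots> = (2 * n) ^ card (prime_factors b)" by simp
  also have "\<dots> \<le> (2 * n) ^ card {p. prime p \<and> p \<le> 2 * n}"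
    using assms factors_small by (intro power_increasing card_mono) auto
  finally show ?thesis unfolding b_def .
qed

lemma four_power_le_power_card_primes:
  fixes n :: nat
  assumes "0 < n"
  shows "4 ^ n \<le> (2 * n) ^ (card {p. prime p \<and> p \<le> 2 * n} + 1)"
proof -
  have "real (4 ^ n) \<le> real (((2 * n) choose n) * (2 * n))"
    using central_binomial_lower_bound[OF assms] assms by (simp add: field_simps)
  then have "4 ^ n \<le> ((2 * n) choose n) * (2 * n)" by (simp only: of_nat_le_iff)
  also have "\<dots> \<le> (2 * n) ^ card {p. prime p \<and> p \<le> 2 * n} * (2 * n)"
    using central_binomial_le_power_card_primes[OF assms] by simp
  finally show ?thesis by (simp only: power_Suc2 Suc_eq_plus1[symmetric])
qed

section \<open>The first primes\<close>

lemma nth_prime_Suc: "nth_prime (Suc i) = enumerate {p::nat. prime p} i"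
  by (simp add: nth_prime_def)

lemma prime_nth_prime_Suc: "prime (nth_prime (Suc i))"
  unfolding nth_prime_Suc using enumerate_in_set[OF primes_infinite] by blast

lemma strict_mono_enumerate_primes: "strict_mono (enumerate {p::nat. prime p})"
  by (rule strict_monoI) (rule enumerate_mono[OF _ primes_infinite])

lemma inj_on_nth_prime: "inj_on nth_prime {1..}"
proof (rule inj_onI)
  fix i j :: nat
  assume "i \<in> {1..}" "j \<in> {1..}" "nth_prime i = nth_prime j"
  then have "i - 1 = j - 1"
    using strict_mono_enumerate_primes by (simp add: nth_prime_def strict_mono_eq)
  then show "i = j" using \<open>i \<in> {1..}\<close> \<open>j \<in> {1..}\<close> by simp
qed

lemma primes_le_nth_prime_Suc:
  "{p. prime p \<and> p \<le> nth_prime (Suc d)} = nth_prime ` {1..Suc d}"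
proof (intro equalityI subsetI)
  fix p assume "p \<in> {p. prime p \<and> p \<le> nth_prime (Suc d)}"
  then obtain i where "p = nth_prime (Suc i)" "nth_prime (Suc i) \<le> nth_prime (Suc d)"
    using enumerate_Ex[OF primes_infinite] by (auto simp: nth_prime_Suc)
  then have "i \<le> d"
    using strict_mono_enumerate_primes by (simp add: nth_prime_Suc strict_mono_less_eq)
  then show "p \<in> nth_prime ` {1..Suc d}"
    using \<open>p = nth_prime (Suc i)\<close> by (auto intro!: image_eqI[where x="Suc i"])
next
  fix p assume "p \<in> nth_prime ` {1..Suc d}"
  then obtain j where "p = nth_prime j" "1 \<le> j" "j \<le> Suc d" by auto
  then have "p = nth_prime (Suc (j - 1))" "j - 1 \<le> d" by simp_all
  then show "p \<in> {p. prime p \<and> p \<le> nth_prime (Suc d)}"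
    using prime_nth_prime_Suc[of "j - 1"] strict_mono_enumerate_primes[THEN strict_mono_less_eq, of "j - 1" d]
    by (simp add: nth_prime_Suc)
qed

lemma card_primes_le_nth_prime_Suc: "card {p. prime p \<and> p \<le> nth_prime (Suc d)} = Suc d"
proof -
  have "inj_on nth_prime {1..Suc d}" by (rule inj_on_subset[OF inj_on_nth_prime]) auto
  then show ?thesis by (simp add: primes_le_nth_prime_Suc card_image)
qed

lemma prod_nth_primes: "(\<Prod>i=1..Suc d. nth_prime i) = \<Prod>{p. prime p \<and> p \<le> nth_prime (Suc d)}"
proof -
  have "inj_on nth_prime {1..Suc d}" by (rule inj_on_subset[OF inj_on_nth_prime]) auto
  then show ?thesis by (simp add: primes_le_nth_prime_Suc prod.reindex)
qed

lemma two_power_nth_prime_le: "2 ^ (nth_prime (Suc d) - 1) \<le> nth_prime (Suc d) ^ (d + 2)"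
proof -
  define N where "N = nth_prime (Suc d)"
  define n where "n = N div 2"
  have "2 \<le> N" unfolding N_def by (rule prime_ge_2_nat[OF prime_nth_prime_Suc])
  then have "1 \<le> n" unfolding n_def by (simp add: Suc_le_eq div_greater_zero_iff)
  have "card {p. prime p \<and> p \<le> 2 * n} \<le> card {p. prime p \<and> p \<le> N}"
    unfolding n_def by (intro card_mono) auto
  then have card_le: "card {p. prime p \<and> p \<le> 2 * n} + 1 \<le> d + 2"
    unfolding N_def card_primes_le_nth_prime_Suc by simp
  have "2 ^ (N - 1) \<le> (2::nat) ^ (2 * n)" unfolding n_def by (intro power_increasing) auto
  also have "\<dots> = 4 ^ n" by (simp add: power_mult)
  also have "\<dots> \<le> (2 * n) ^ (card {p. prime p \<and> p \<le> 2 * n} + 1)"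
    using \<open>1 \<le> n\<close> by (intro four_power_le_power_card_primes) simp
  also have "\<dots> \<le> (2 * n) ^ (d + 2)" using \<open>1 \<le> n\<close> card_le by (intro power_increasing) auto
  also have "\<dots> \<le> N ^ (d + 2)" unfolding n_def by (intro power_mono) auto
  finally show ?thesis unfolding N_def .
qed

lemma nth_prime_le_powr: "real (nth_prime (Suc d)) \<le> (12 * (real d + 2)) powr (3/2)"
proof -
  define N where "N = nth_prime (Suc d)"
  define x where "x = real N"
  have "2 \<le> N" unfolding N_def by (rule prime_ge_2_nat[OF prime_nth_prime_Suc])
  then have x_ge_2: "2 \<le> x" unfolding x_def by simp
  have "real (2 ^ (N - 1)) \<le> real (N ^ (d + 2))"
    unfolding N_def by (simp only: of_nat_le_iff two_power_nth_prime_le)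
  then have "ln (2 ^ (N - 1)) \<le> ln (x ^ (d + 2))"
    using x_ge_2 unfolding x_def by (subst ln_le_cancel_iff) auto
  moreover have "ln (2 ^ (N - 1)) = (x - 1) * ln 2"
    using \<open>2 \<le> N\<close> by (simp add: ln_realpow x_def of_nat_diff)
  moreover have "ln (x ^ (d + 2)) = (real d + 2) * ln x"
    using x_ge_2 by (subst ln_realpow) auto
  ultimately have ln_le: "(x - 1) * ln 2 \<le> (real d + 2) * ln x" by simp
  have "exp (1/2::real) ^ 2 = exp 1" by (simp flip: exp_of_nat_mult)
  also have "\<dots> \<le> 2 ^ 2" using exp_le by simp
  finally have "1/2 \<le> ln (2::real)" by (subst ln_ge_iff) (auto intro: power2_le_imp_le)
  have "x / 4 \<le> (x - 1) * (1/2)" using x_ge_2 by simp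
  also have "\<dots> \<le> (x - 1) * ln 2" using x_ge_2 \<open>1/2 \<le> ln 2\<close> by (intro mult_left_mono) auto
  also have "\<dots> \<le> (real d + 2) * ln x" by (rule ln_le)
  also have "\<dots> \<le> (real d + 2) * (3 * x powr (1/3))"
    using ln_le_minus_one[of "x powr (1/3)"] x_ge_2 by (intro mult_left_mono) (simp_all add: ln_powr)
  finally have "x powr (1/3) * x powr (2/3) \<le> x powr (1/3) * (12 * (real d + 2))"
    using x_ge_2 by (simp flip: powr_add add: algebra_simps)
  then have "x powr (2/3) \<le> 12 * (real d + 2)" using x_ge_2 by simp
  then have "(x powr (2/3)) powr (3/2) \<le> (12 * (real d + 2)) powr (3/2)" by (intro powr_mono2) auto
  then show ?thesis using x_ge_2 unfolding x_def N_def by (simp add: powr_powr)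
qed

section \<open>Rankin's trick\<close>

lemma power_Suc_add_ge:
  fixes s t :: real
  assumes "0 \<le> s" "0 \<le> t"
  shows "s ^ Suc n + real (Suc n) * t * s ^ n \<le> (s + t) ^ Suc n"
proof (induction n)
  case 0
  then show ?case by simp
next
  case (Suc n)
  have "s ^ Suc (Suc n) + real (Suc (Suc n)) * t * s ^ Suc n
        \<le> (s + t) * (s ^ Suc n + real (Suc n) * t * s ^ n)"
    using assms by (simp add: algebra_simps)
  also have "\<dots> \<le> (s + t) * (s + t) ^ Suc n"
    using Suc assms by (intro mult_left_mono) auto
  finally show ?case by simp
qed

lemma subsets_card_0: "finite I \<Longrightarrow> {U. U \<subseteq> I \<and> card U = 0} = {{}}"
  by (auto dest: finite_subset)

lemma subsets_insert_card_Suc: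
  assumes "finite I" "a \<notin> I"
  shows "{U. U \<subseteq> insert a I \<and> card U = Suc j} =
         {U. U \<subseteq> I \<and> card U = Suc j} \<union> insert a ` {U. U \<subseteq> I \<and> card U = j}"
proof (intro equalityI subsetI)
  fix U assume U: "U \<in> {U. U \<subseteq> insert a I \<and> card U = Suc j}"
  then have "finite U" using assms finite_subset by auto
  show "U \<in> {U. U \<subseteq> I \<and> card U = Suc j} \<union> insert a ` {U. U \<subseteq> I \<and> card U = j}"
  proof (cases "a \<in> U")
    case True
    then have "U = insert a (U - {a})" "card (U - {a}) = j" "U - {a} \<subseteq> I"
      using U \<open>finite U\<close> by auto
    then show ?thesis by blast
  qed (use U in auto)
next
  fix U assume "U \<in> {U. U \<subseteq> I \<and> card U = Suc j} \<union> insert a ` {U. U \<subseteq> I \<and> card U = j}"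
  then show "U \<in> {U. U \<subseteq> insert a I \<and> card U = Suc j}"
    using assms by (auto intro!: card_insert_disjoint elim: finite_subset)
qed

lemma sum_prod_subsets_insert:
  fixes w :: "'a \<Rightarrow> real"
  assumes "finite I" "a \<notin> I"
  shows "(\<Sum>U\<in>{U. U \<subseteq> insert a I \<and> card U = Suc j}. \<Prod>u\<in>U. w u)
       = (\<Sum>U\<in>{U. U \<subseteq> I \<and> card U = Suc j}. \<Prod>u\<in>U. w u)
         + w a * (\<Sum>U\<in>{U. U \<subseteq> I \<and> card U = j}. \<Prod>u\<in>U. w u)"
proof -
  have finite_subsets: "finite {U. U \<subseteq> I \<and> card U = k}" for k
    by (rule finite_subset[of _ "Pow I"]) (use assms(1) in auto)
  have "inj_on (insert a) {U. U \<subseteq> I \<and> card U = j}"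
    using assms(2) by (intro inj_onI) (metis insert_ident subsetD mem_Collect_eq)
  then have "(\<Sum>U\<in>insert a ` {U. U \<subseteq> I \<and> card U = j}. \<Prod>u\<in>U. w u)
      = (\<Sum>U\<in>{U. U \<subseteq> I \<and> card U = j}. \<Prod>u\<in>insert a U. w u)"
    by (simp add: sum.reindex)
  also have "\<dots> = w a * (\<Sum>U\<in>{U. U \<subseteq> I \<and> card U = j}. \<Prod>u\<in>U. w u)"
    using assms by (auto simp: sum_distrib_left dest: finite_subset intro!: sum.cong prod.insert)
  finally show ?thesis
    unfolding subsets_insert_card_Suc[OF assms]
    using assms(2) by (subst sum.union_disjoint) (auto simp: finite_subsets)
qed

lemma fact_mult_sum_prod_subsets_le:
  fixes w :: "'a \<Rightarrow> real"
  assumes "finite I" "\<And>x. x \<in> I \<Longrightarrow> 0 \<le> w x"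
  shows "fact k * (\<Sum>U\<in>{U. U \<subseteq> I \<and> card U = k}. \<Prod>u\<in>U. w u) \<le> (\<Sum>x\<in>I. w x) ^ k"
  using assms
proof (induction I arbitrary: k rule: finite_induct)
  case empty
  have subsets_empty: "{U. U \<subseteq> {} \<and> card U = k} = (if k = 0 then {{}} else {})" by auto
  show ?case by (simp only: subsets_empty) simp
next
  case (insert a I)
  define E where "E k = (\<Sum>U\<in>{U. U \<subseteq> I \<and> card U = k}. \<Prod>u\<in>U. w u)" for k
  define s where "s = (\<Sum>x\<in>I. w x)"
  have w_nonneg: "\<And>x. x \<in> I \<Longrightarrow> 0 \<le> w x" "0 \<le> w a" using insert.prems by auto
  then have "0 \<le> s" unfolding s_def by (intro sum_nonneg) auto
  have IH: "fact k * E k \<le> s ^ k" for k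
    unfolding E_def s_def by (rule insert.IH) (use w_nonneg in auto)
  show ?case
  proof (cases k)
    case 0
    then show ?thesis using insert.hyps by (simp add: subsets_card_0)
  next
    case (Suc j)
    have "fact k * (\<Sum>U\<in>{U. U \<subseteq> insert a I \<and> card U = k}. \<Prod>u\<in>U. w u)
        = fact (Suc j) * E (Suc j) + real (Suc j) * w a * (fact j * E j)"
      unfolding Suc sum_prod_subsets_insert[OF insert.hyps] E_def by (simp add: algebra_simps)
    also have "\<dots> \<le> s ^ Suc j + real (Suc j) * w a * s ^ j"
      using IH[of "Suc j"] IH[of j] w_nonneg(2) by (intro add_mono mult_left_mono) auto
    also have "\<dots> \<le> (s + w a) ^ Suc j" by (rule power_Suc_add_ge[OF \<open>0 \<le> s\<close> w_nonneg(2)])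
    finally show ?thesis unfolding Suc s_def using insert.hyps by (simp add: add.commute)
  qed
qed

lemma inverse_power_Suc_le_diff:
  fixes M s :: nat
  assumes "1 \<le> M" "1 \<le> s"
  shows "1 / real (Suc M) ^ Suc s \<le> (1 / real M ^ s - 1 / real (Suc M) ^ s) / real s"
proof -
  define A B where "A = real M ^ s" and "B = (real M + 1) ^ s"
  have "0 < A" "0 < B" using assms unfolding A_def B_def by auto
  have "real M ^ Suc s + real (Suc s) * 1 * real M ^ s \<le> (real M + 1) ^ Suc s"
    by (rule power_Suc_add_ge) auto
  then have "real s * A \<le> (real M + 1) * (B - A)"
    unfolding A_def B_def by (simp add: algebra_simps)
  then have "real s * A / ((real M + 1) * (A * B)) \<le> (real M + 1) * (B - A) / ((real M + 1) * (A * B))"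
    using \<open>0 < A\<close> \<open>0 < B\<close> by (intro divide_right_mono) auto
  then have "real s / ((real M + 1) * B) \<le> (B - A) / (A * B)"
    using \<open>0 < A\<close> by simp
  also have "\<dots> = 1 / A - 1 / B"
    using \<open>0 < A\<close> \<open>0 < B\<close> by (simp add: field_simps)
  finally show ?thesis
    using assms unfolding A_def B_def by (simp add: field_simps add.commute)
qed

lemma sum_inverse_power_greaterThan_le:
  fixes N M s :: nat
  assumes "1 \<le> N" "1 \<le> s"
  shows "(\<Sum>n\<in>{N<..M}. 1 / real n ^ Suc s) \<le> 1 / (real s * real N ^ s)"
proof (cases "N \<le> M")
  case True
  then have "(\<Sum>n\<in>{N<..M}. 1 / real n ^ Suc s) \<le> (1 / real N ^ s - 1 / real M ^ s) / real s"
  proof (induction M rule: dec_induct)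
    case (step M)
    have "{N<..Suc M} = insert (Suc M) {N<..M}" using step by auto
    then have "(\<Sum>n\<in>{N<..Suc M}. 1 / real n ^ Suc s)
        = 1 / real (Suc M) ^ Suc s + (\<Sum>n\<in>{N<..M}. 1 / real n ^ Suc s)" by simp
    also have "\<dots> \<le> (1 / real M ^ s - 1 / real (Suc M) ^ s) / real s + (1 / real N ^ s - 1 / real M ^ s) / real s"
      using inverse_power_Suc_le_diff[of M s] step assms by (intro add_mono) auto
    also have "\<dots> = (1 / real N ^ s - 1 / real (Suc M) ^ s) / real s"
      by (simp add: diff_divide_distrib)
    finally show ?case .
  qed simp
  also have "\<dots> \<le> 1 / (real s * real N ^ s)"
    using assms by (simp add: divide_right_mono field_simps)
  finally show ?thesis .
qed simp

lemma power_div_fact_le_exp: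
  fixes x :: real
  assumes "0 \<le> x"
  shows "x ^ k / fact k \<le> exp x"
proof -
  have exp_sums: "(\<lambda>m. x ^ m / fact m) sums exp x"
    using exp_converges[of x] by (simp add: scaleR_conv_of_real divide_inverse mult.commute)
  have "x ^ k / fact k \<le> (\<Sum>m<Suc k. x ^ m / fact m)"
    using assms by (simp add: sum_nonneg)
  also have "\<dots> \<le> (\<Sum>m. x ^ m / fact m)"
    using assms exp_sums by (intro sum_le_suminf) (auto simp: sums_iff)
  also have "\<dots> = exp x" using exp_sums by (simp add: sums_iff)
  finally show ?thesis .
qed

lemma card_sets_with_small_product_le:
  fixes N s k :: nat
  assumes "2 \<le> N" "1 \<le> s"
  shows "real (card {U. U \<subseteq> {N<..N ^ Suc k} \<and> card U = k \<and> \<Prod>U \<le> N ^ Suc k})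
         \<le> real N ^ Suc s * exp (real N / real s)"
proof -
  define I where "I = {N<..N ^ Suc k}"
  define F where "F = {U. U \<subseteq> I \<and> card U = k \<and> \<Prod>U \<le> N ^ Suc k}"
  define G where "G = {U. U \<subseteq> I \<and> card U = k}"
  define w where "w n = 1 / real n ^ Suc s" for n :: nat
  define c where "c = real N ^ (Suc k * Suc s)"
  have "finite I" "F \<subseteq> G" unfolding I_def F_def G_def by auto
  have w_nonneg: "0 \<le> w n" for n unfolding w_def by simp
  have "0 \<le> c" unfolding c_def by simp
  have "finite G" unfolding G_def by (rule finite_subset[of _ "Pow I"]) (use \<open>finite I\<close> in auto)
  have weight_ge_1: "1 \<le> c * (\<Prod>u\<in>U. w u)" if "U \<in> F" for U
  proof -
    have "U \<subseteq> I" "\<Prod>U \<le> N ^ Suc k" using that unfolding F_def by auto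
    have "0 < \<Prod>U" using \<open>U \<subseteq> I\<close> unfolding I_def by (intro prod_pos) auto
    have "(\<Prod>u\<in>U. w u) = 1 / real (\<Prod>U) ^ Suc s"
      unfolding w_def by (simp add: prod_dividef prod_power_distrib del: power_Suc)
    moreover have "real (\<Prod>U) ^ Suc s \<le> c"
      unfolding c_def power_mult using \<open>\<Prod>U \<le> N ^ Suc k\<close>
      by (intro power_mono) (simp_all only: of_nat_power[symmetric] of_nat_le_iff of_nat_0_le_iff)
    ultimately show ?thesis using \<open>0 < \<Prod>U\<close> by (simp add: le_divide_eq_1_pos del: of_nat_prod)
  qed
  have "real (card F) = (\<Sum>U\<in>F. 1)" by simp
  also have "\<dots> \<le> (\<Sum>U\<in>F. c * (\<Prod>u\<in>U. w u))" by (intro sum_mono weight_ge_1)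
  also have "\<dots> \<le> (\<Sum>U\<in>G. c * (\<Prod>u\<in>U. w u))"
    using \<open>F \<subseteq> G\<close> \<open>finite G\<close> w_nonneg \<open>0 \<le> c\<close>
    by (intro sum_mono2) (auto intro!: mult_nonneg_nonneg prod_nonneg)
  also have "\<dots> = c * (\<Sum>U\<in>G. \<Prod>u\<in>U. w u)" by (simp add: sum_distrib_left)
  also have "\<dots> \<le> c * ((\<Sum>n\<in>I. w n) ^ k / fact k)"
    using fact_mult_sum_prod_subsets_le[of I w k] \<open>finite I\<close>
    by (intro mult_left_mono) (auto simp: G_def w_def c_def field_simps)
  also have "\<dots> \<le> c * ((1 / (real s * real N ^ s)) ^ k / fact k)"
    using sum_inverse_power_greaterThan_le[of N s "N ^ Suc k"] assms unfolding I_def w_def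
    by (intro mult_left_mono divide_right_mono power_mono sum_nonneg) (auto simp: c_def)
  also have "\<dots> = real N ^ Suc s * ((real N / real s) ^ k / fact k)"
  proof -
    have "Suc k * Suc s = Suc s + k + s * k" by simp
    then have "c = real N ^ Suc s * real N ^ k * (real N ^ s) ^ k"
      unfolding c_def by (simp only: power_add power_mult)
    then show ?thesis
      using assms by (simp add: power_divide power_mult_distrib field_simps)
  qed
  also have "\<dots> \<le> real N ^ Suc s * exp (real N / real s)"
    by (intro mult_left_mono power_div_fact_le_exp) auto
  finally show ?thesis unfolding F_def I_def .
qed

section \<open>Squarefree numbers below a primorial\<close>

lemma card_Diff_eq_Suc_card_Diff:
  assumes "finite S" "finite T" "card T = Suc (card S)"
  shows "card (T - S) = Suc (card (S - T))"
proof -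
  have "card (T \<inter> S) \<le> card S" using assms(1) by (intro card_mono) auto
  then show ?thesis using assms by (simp add: card_Diff_subset_Int Int_commute)
qed

lemma prod_Diff_le_prod_Diff:
  fixes S T :: "nat set"
  assumes "finite S" "finite T" "0 \<notin> S" "\<Prod>S \<le> \<Prod>T"
  shows "\<Prod>(S - T) \<le> \<Prod>(T - S)"
proof -
  have "0 < \<Prod>(S \<inter> T)" using assms(3) by (intro prod_pos) (metis IntD1 gr0I)
  moreover have "\<Prod>(S \<inter> T) * \<Prod>(S - T) \<le> \<Prod>(S \<inter> T) * \<Prod>(T - S)"
    using prod.Int_Diff[OF assms(1), of id T] prod.Int_Diff[OF assms(2), of id S] assms(4)
    by (simp add: Int_commute)
  ultimately show ?thesis by simp
qed

lemma squarefree_prod_prime_factors: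
  fixes m :: nat
  assumes "0 < m" "squarefree m"
  shows "\<Prod>(prime_factors m) = m"
proof -
  have "(\<Prod>p\<in>prime_factors m. p ^ multiplicity p m) = m"
    using prime_factorization_nat[OF assms(1)] by simp
  moreover have "multiplicity p m = 1" if "p \<in> prime_factors m" for p
    using that assms squarefree_factorial_semiring'[of m] by auto
  ultimately show ?thesis by simp
qed

lemma prime_factors_Diff_primes_le:
  fixes m N :: nat
  defines "T \<equiv> {p. prime p \<and> p \<le> N}"
  assumes "0 < m" "squarefree m" "m \<le> \<Prod>T" "card T = Suc (card (prime_factors m))"
  shows "card (T - prime_factors m) = Suc (card (prime_factors m - T))"
    and "\<Prod>(prime_factors m - T) \<le> N ^ Suc (card (prime_factors m - T))"
    and "prime_factors m - T \<subseteq> {N<..N ^ Suc (card (prime_factors m - T))}"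
proof -
  define S U where "S = prime_factors m" and "U = prime_factors m - T"
  have "finite T" unfolding T_def by simp
  obtain p where "p \<in> T" using assms(5) by fastforce
  then have "1 \<le> N" unfolding T_def using prime_ge_1_nat by (auto intro: order.trans)
  show card_eq: "card (T - prime_factors m) = Suc (card U)"
    using card_Diff_eq_Suc_card_Diff[of S T] \<open>finite T\<close> assms(5) unfolding S_def U_def by simp
  have "\<Prod>S \<le> \<Prod>T" using squarefree_prod_prime_factors assms(2-4) unfolding S_def by simp
  then have "\<Prod>U \<le> \<Prod>(T - S)"
    using \<open>finite T\<close> unfolding U_def S_def by (intro prod_Diff_le_prod_Diff) auto
  also have "\<dots> \<le> N ^ card (T - S)" using \<open>1 \<le> N\<close> by (intro prod_le_power) (auto simp: T_def)
  finally show prod_le: "\<Prod>U \<le> N ^ Suc (card U)" using card_eq unfolding S_def by simp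
  have "0 < \<Prod>U" unfolding U_def by (intro prod_pos) (auto intro: prime_gt_0_nat)
  have "u \<le> \<Prod>U" if "u \<in> U" for u
    using that \<open>0 < \<Prod>U\<close> by (intro dvd_imp_le) (auto simp: U_def intro: dvd_prodI)
  moreover have "N < u" if "u \<in> U" for u using that unfolding U_def T_def by auto
  ultimately show "U \<subseteq> {N<..N ^ Suc (card U)}" using prod_le by fastforce
qed

lemma card_squarefree_le_primorial:
  fixes N d s :: nat
  defines "T \<equiv> {p. prime p \<and> p \<le> N}"
  assumes "card T = Suc d" "2 \<le> N" "1 \<le> s"
  shows "real (card {m. 0 < m \<and> m \<le> \<Prod>T \<and> squarefree m \<and> card (prime_factors m) = d})
         \<le> 2 ^ Suc d * real N ^ Suc s * exp (real N / real s)"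
proof -
  define X where "X = {m. 0 < m \<and> m \<le> \<Prod>T \<and> squarefree m \<and> card (prime_factors m) = d}"
  define small where "small k = {U. U \<subseteq> {N<..N ^ Suc k} \<and> card U = k \<and> \<Prod>U \<le> N ^ Suc k}" for k
  define split where "split m = (T - prime_factors m, prime_factors m - T)" for m
  have "finite T" unfolding T_def by simp
  have "finite (small k)" for k
    unfolding small_def by (rule finite_subset[of _ "Pow {N<..N ^ Suc k}"]) auto
  have "inj_on split X"
  proof (rule inj_onI)
    fix m m' assume "m \<in> X" "m' \<in> X" "split m = split m'"
    have "prime_factors n = (T - fst (split n)) \<union> snd (split n)" for n
      unfolding split_def by auto
    then have "prime_factors m = prime_factors m'" using \<open>split m = split m'\<close> by metis
    then show "m = m'"
      using \<open>m \<in> X\<close> \<open>m' \<in> X\<close> squarefree_prod_prime_factors unfolding X_def by (metis mem_Collect_eq)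
  qed
  moreover have "split ` X \<subseteq> Sigma (Pow T) (\<lambda>A. small (card A - 1))"
  proof (rule image_subsetI)
    fix m assume "m \<in> X"
    then have "0 < m" "squarefree m" "m \<le> \<Prod>T" "card T = Suc (card (prime_factors m))"
      using assms(2) unfolding X_def by auto
    from prime_factors_Diff_primes_le[OF this[unfolded T_def]]
    show "split m \<in> Sigma (Pow T) (\<lambda>A. small (card A - 1))"
      unfolding split_def small_def T_def by auto
  qed
  ultimately have "card X \<le> card (Sigma (Pow T) (\<lambda>A. small (card A - 1)))"
    using \<open>finite T\<close> \<open>\<And>k. finite (small k)\<close> by (metis card_image card_mono finite_Pow_iff finite_SigmaI)
  also have "\<dots> = (\<Sum>A\<in>Pow T. card (small (card A - 1)))"
    using \<open>finite T\<close> \<open>\<And>k. finite (small k)\<close> by (intro card_SigmaI) auto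
  finally have "real (card X) \<le> (\<Sum>A\<in>Pow T. real (card (small (card A - 1))))"
    by (simp flip: of_nat_sum)
  also have "\<dots> \<le> (\<Sum>A\<in>Pow T. real N ^ Suc s * exp (real N / real s))"
    unfolding small_def using assms(3,4) by (intro sum_mono card_sets_with_small_product_le)
  also have "\<dots> = 2 ^ Suc d * real N ^ Suc s * exp (real N / real s)"
    using \<open>finite T\<close> assms(2) by (simp add: card_Pow)
  finally show ?thesis unfolding X_def .
qed

lemma pi_d_primorial_le:
  fixes d s :: nat
  assumes "1 \<le> s"
  shows "real (pi_d d (real (\<Prod>i=1..Suc d. nth_prime i)))
         \<le> 2 ^ Suc d * real (nth_prime (Suc d)) ^ Suc s * exp (real (nth_prime (Suc d)) / real s)"
proof -
  have "{m. 0 < m \<and> real m \<le> real (\<Prod>i=1..Suc d. nth_prime i) \<and> squarefree m \<and> card (prime_factors m) = d}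
      = {m. 0 < m \<and> m \<le> \<Prod>{p. prime p \<and> p \<le> nth_prime (Suc d)} \<and> squarefree m \<and> card (prime_factors m) = d}"
    by (simp only: of_nat_le_iff prod_nth_primes)
  then show ?thesis
    unfolding pi_d_def using prime_ge_2_nat[OF prime_nth_prime_Suc] assms
    by (simp only:) (intro card_squarefree_le_primorial card_primes_le_nth_prime_Suc)
qed

lemma eventually_nth_prime_power_le_exp:
  "eventually (\<lambda>d. real (nth_prime (Suc d)) ^ (nth_prime (Suc d) div d + 2) \<le> exp (real d)) sequentially"
proof -
  define B where "B y = (12 * (y + 2)) powr (3/2)" for y :: real
  have "eventually (\<lambda>y. (B y / y + 2) * ln (B y) \<le> y) at_top"
    unfolding B_def by real_asymp
  then have "eventually (\<lambda>d. (B (real d) / real d + 2) * ln (B (real d)) \<le> real d) sequentially"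
    by (rule eventually_compose_filterlim[OF _ filterlim_real_sequentially])
  then show ?thesis using eventually_gt_at_top[of 0]
  proof eventually_elim
    case (elim d)
    define N where "N = nth_prime (Suc d)"
    have "2 \<le> real N" using prime_ge_2_nat[OF prime_nth_prime_Suc] unfolding N_def by simp
    have "real N \<le> B (real d)" unfolding N_def B_def by (rule nth_prime_le_powr)
    have "real (N div d) * real d \<le> real N"
      by (simp only: of_nat_mult[symmetric] of_nat_le_iff div_times_less_eq_dividend)
    then have "real (N div d) \<le> real N / real d" using elim by (simp add: field_simps)
    also have "\<dots> \<le> B (real d) / real d"
      using \<open>real N \<le> B (real d)\<close> by (intro divide_right_mono) auto
    finally have "real (N div d) \<le> B (real d) / real d" .
    have "real N ^ (N div d + 2) = exp (real (N div d + 2) * ln (real N))"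
      using \<open>2 \<le> real N\<close> by (subst ln_realpow[symmetric]) auto
    also have "\<dots> \<le> exp ((B (real d) / real d + 2) * ln (B (real d)))"
      using \<open>real (N div d) \<le> B (real d) / real d\<close> \<open>2 \<le> real N\<close> \<open>real N \<le> B (real d)\<close> elim
      by (intro exp_mono mult_mono add_mono divide_right_mono) auto
    also have "\<dots> \<le> exp (real d)" using elim by simp
    finally show ?case unfolding N_def .
  qed
qed

lemma eventually_pi_d_primorial_le:
  "eventually (\<lambda>d. real (pi_d d (real (\<Prod>i=1..Suc d. nth_prime i))) \<le> 2 * (2 * exp 2) ^ d) sequentially"
  using eventually_nth_prime_power_le_exp eventually_gt_at_top[of 0]
proof eventually_elim
  case (elim d)
  define N where "N = nth_prime (Suc d)"
  define s where "s = N div d + 1"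
  have "N mod d < d" using elim by simp
  then have "N < d * s"
    unfolding s_def distrib_left mult_1_right using mult_div_mod_eq[of d N] by linarith
  then have "real N \<le> real d * real s" by (simp only: of_nat_mult[symmetric] of_nat_le_iff less_imp_le)
  then have "real N / real s \<le> real d" unfolding s_def by (simp add: divide_le_eq)
  have "real (pi_d d (real (\<Prod>i=1..Suc d. nth_prime i)))
      \<le> 2 ^ Suc d * real N ^ Suc s * exp (real N / real s)"
    unfolding N_def by (rule pi_d_primorial_le) (simp add: s_def)
  also have "\<dots> \<le> 2 ^ Suc d * exp (real d) * exp (real d)"
    using elim \<open>real N / real s \<le> real d\<close> unfolding N_def s_def
    by (intro mult_mono mult_left_mono) auto
  also have "\<dots> = 2 * (2 * exp 2) ^ d"
    by (simp add: power_mult_distrib flip: exp_add exp_of_nat_mult)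
  finally show ?case .
qed

lemma eventually_le_power_imp_le_const_mult_power:
  fixes f :: "nat \<Rightarrow> real"
  assumes "eventually (\<lambda>n. f n \<le> c * C ^ n) sequentially" "1 \<le> C"
  shows "\<exists>K. \<forall>n. f n \<le> K * C ^ n"
proof -
  obtain n0 where n0: "\<And>n. n \<ge> n0 \<Longrightarrow> f n \<le> c * C ^ n"
    using assms(1) unfolding eventually_sequentially by blast
  define K where "K = \<bar>c\<bar> + (\<Sum>n<n0. \<bar>f n\<bar>)"
  have "0 \<le> K" "c \<le> K"
    unfolding K_def by (simp_all add: sum_nonneg add_increasing2)
  have "f n \<le> K * C ^ n" for n
  proof (cases "n < n0")
    case True
    have "\<bar>f n\<bar> \<le> (\<Sum>n<n0. \<bar>f n\<bar>)" using True by (intro member_le_sum) auto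
    then have "f n \<le> (\<Sum>n<n0. \<bar>f n\<bar>)" by simp
    also have "\<dots> \<le> K" unfolding K_def by simp
    also have "\<dots> \<le> K * C ^ n"
      using \<open>0 \<le> K\<close> one_le_power[OF assms(2)] by (metis mult_left_mono mult.right_neutral)
    finally show ?thesis .
  next
    case False
    then have "f n \<le> c * C ^ n" by (intro n0) simp
    also have "\<dots> \<le> K * C ^ n"
      using \<open>c \<le> K\<close> assms(2) by (intro mult_right_mono) auto
    finally show ?thesis .
  qed
  then show ?thesis by blast
qed

theorem lemma3p3:
  shows "\<exists>C::real. C > 0 \<and> (\<exists>K::real. \<forall>d::nat. d \<ge> 1 \<longrightarrow>
           real (pi_d d (real (\<Prod>i=1..d+1. nth_prime i))) \<le> K * C ^ d)"
proof -
  have "1 \<le> 2 * exp (2::real)" using one_le_exp_iff[of 2] by linarith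
  then obtain K where "\<And>d. real (pi_d d (real (\<Prod>i=1..Suc d. nth_prime i))) \<le> K * (2 * exp 2) ^ d"
    using eventually_le_power_imp_le_const_mult_power[OF eventually_pi_d_primorial_le] by blast
  then show ?thesis by (intro exI[of _ "2 * exp 2"] conjI exI[of _ K]) auto
qed

end
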